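(* Let $\mathcal{L}(X,\phi)$ be smooth on $(0,\infty)\times I$ ($I$ an open interval) with $\mathcal{L}_X\neq0$ and $\mathcal{L}_X+2X\mathcal{L}_{XX}\neq 0$. Define $$c_{\rm s}^2=\frac{\mathcal{L}_X}{\mathcal{L}_X+2X\mathcal{L}_{XX}},\qquad \tau=\mathcal{L}_\phi-\frac{2X\mathcal{L}_X\mathcal{L}_{X\phi}-\mathcal{L}_X\mathcal{L}_\phi}{\mathcal{L}_X+2X\mathcal{L}_{XX}}.$$ Then (a) $\tau=\left.\partial p/\partial\phi\right|_{\rho}$, i.e. $\tau=p_\phi-p_X\rho_\phi/\rho_X$ where $p=\mathcal{L}$, $\rho=2X\mathcal{L}_X-\mathcal{L}$; (b) $\tau\equiv 0$ on the domain if and only if $\left(\dfrac{\mathcal{L}_\phi}{X\mathcal{L}_X}\right)_X\equiv 0$; and (c) $\tau\equiv0$ if and only if there exist smooth functions $f$ on $I$ and $G$ on $(0,\infty)$ with $\mathcal{L}(X,\phi)=G(e^{-2f(\phi)}X)$, i.e. the Lagrangian can be brought to purely kinetic form by the field redefinition $\tilde\phi_{,\mu}=e^{-f(\phi)}\phi_{,\mu}$.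
   Context: $X=\tfrac12 g^{\mu\nu}\phi_{,\mu}\phi_{,\nu}$ is the kinetic term of the scalar field $\phi$; subscripts $X,\phi$ denote partial derivatives. $c_{\rm s}^2=p_X/\rho_X$ is the adiabatic speed of sound (derivative of $p$ with respect to $\rho$ at fixed $\phi$), and $\tau$ is the coefficient of the entropy-per-particle perturbation in the evolution equation of the gravitational potential; $\tau=0$ corresponds to adiabatic perturbations. *)

theory Defs
  imports "HOL-Analysis.Analysis"
begin

definition pdX :: "(real \<Rightarrow> real \<Rightarrow> real) \<Rightarrow> real \<Rightarrow> real \<Rightarrow> real" where
  "pdX L = (\<lambda>X ph. deriv (\<lambda>x. L x ph) X)"

definition pdphi :: "(real \<Rightarrow> real \<Rightarrow> real) \<Rightarrow> real \<Rightarrow> real \<Rightarrow> real" where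
  "pdphi L = (\<lambda>X ph. deriv (\<lambda>p. L X p) ph)"

fun iter_pd :: "bool list \<Rightarrow> (real \<Rightarrow> real \<Rightarrow> real) \<Rightarrow> real \<Rightarrow> real \<Rightarrow> real" where
  "iter_pd [] L = L"
| "iter_pd (b # ds) L = (if b then pdX (iter_pd ds L) else pdphi (iter_pd ds L))"

definition smooth2_on :: "(real \<Rightarrow> real \<Rightarrow> real) \<Rightarrow> (real \<times> real) set \<Rightarrow> bool" where
  "smooth2_on L U \<longleftrightarrow> (\<forall>ds. (\<lambda>z. iter_pd ds L (fst z) (snd z)) differentiable_on U)"

definition smooth1_on :: "(real \<Rightarrow> real) \<Rightarrow> real set \<Rightarrow> bool" where
  "smooth1_on f S \<longleftrightarrow> (\<forall>n. (deriv ^^ n) f differentiable_on S)"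

definition cs2 :: "(real \<Rightarrow> real \<Rightarrow> real) \<Rightarrow> real \<Rightarrow> real \<Rightarrow> real" where
  "cs2 L X ph = pdX L X ph / (pdX L X ph + 2 * X * pdX (pdX L) X ph)"

definition tau :: "(real \<Rightarrow> real \<Rightarrow> real) \<Rightarrow> real \<Rightarrow> real \<Rightarrow> real" where
  "tau L X ph = pdphi L X ph
     - (2 * X * pdX L X ph * pdphi (pdX L) X ph - pdX L X ph * pdphi L X ph)
       / (pdX L X ph + 2 * X * pdX (pdX L) X ph)"

definition rho :: "(real \<Rightarrow> real \<Rightarrow> real) \<Rightarrow> real \<Rightarrow> real \<Rightarrow> real" where
  "rho L = (\<lambda>X ph. 2 * X * pdX L X ph - L X ph)"

end

theory Submission
  imports Defs
begin

(*
  D = L_X + 2 X L_XX is rho_X and rho_phi = 2 X L_Xphi - L_phi, which gives (a).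
  Since the mixed partials of L commute (Schwarz), tau D = -2 (X L_X)^2 d/dX (L_phi / (X L_X));
  as D and X L_X do not vanish, tau = 0 exactly when q = L_phi / (X L_X) does not depend on X,
  which is (b). If L = G(e^(-2 f(phi)) X) then q = -2 f'(phi). Conversely, if q = q(phi), take f
  with f' = -q/2 and f(phi0) = 0. For a(phi) = e^(2 f(phi)) Y the chain rule gives
  d/dphi L(a, phi) = -q a L_X + L_phi = 0, so L(X, phi) = L(e^(-2 f(phi)) X, phi0).
*)

section \<open>Partial derivatives of functions of two real variables\<close>

lemma has_derivative_partials:
  fixes M :: "real \<Rightarrow> real \<Rightarrow> real"
  assumes "(\<lambda>z. M (fst z) (snd z)) differentiable (at (x, p))"
  shows "((\<lambda>z. M (fst z) (snd z)) has_derivative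
           (\<lambda>z. pdX M x p * fst z + pdphi M x p * snd z)) (at (x, p))"
proof -
  obtain D where D: "((\<lambda>z. M (fst z) (snd z)) has_derivative D) (at (x, p))"
    using assms unfolding differentiable_def by blast
  have lin: "linear D" using D by (rule has_derivative_linear)
  define dx dy where "dx = D (1, 0)" and "dy = D (0, 1)"
  have D_eq: "D (u, v) = dx * u + dy * v" for u v
  proof -
    have "D (u, v) = D (u *\<^sub>R (1, 0)) + D (v *\<^sub>R (0, 1))"
      using linear_add[OF lin, of "u *\<^sub>R (1, 0)" "v *\<^sub>R (0, 1)"] by simp
    then show ?thesis unfolding dx_def dy_def
      by (simp only: linear_scale[OF lin]) (simp add: mult.commute)
  qed
  have "((\<lambda>t. (t, p)) has_derivative (\<lambda>u. (u, 0))) (at x)"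
    by (auto intro!: derivative_eq_intros)
  from diff_chain_at[OF this D] have "((\<lambda>t. M t p) has_real_derivative dx) (at x)"
    unfolding has_field_derivative_def o_def by (simp add: D_eq)
  then have pdX_eq: "pdX M x p = dx"
    unfolding pdX_def by (rule DERIV_imp_deriv)
  have "((\<lambda>t. (x, t)) has_derivative (\<lambda>v. (0, v))) (at p)"
    by (auto intro!: derivative_eq_intros)
  from diff_chain_at[OF this D] have "((\<lambda>t. M x t) has_real_derivative dy) (at p)"
    unfolding has_field_derivative_def o_def by (simp add: D_eq)
  then have pdphi_eq: "pdphi M x p = dy"
    unfolding pdphi_def by (rule DERIV_imp_deriv)
  show ?thesis
    using D by (rule has_derivative_eq_rhs) (auto simp: pdX_eq pdphi_eq fun_eq_iff D_eq)
qed

lemma has_real_derivative_pd_chain: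
  fixes M :: "real \<Rightarrow> real \<Rightarrow> real"
  assumes "(\<lambda>z. M (fst z) (snd z)) differentiable (at (a t, b t))"
    and "(a has_real_derivative a') (at t)" and "(b has_real_derivative b') (at t)"
  shows "((\<lambda>s. M (a s) (b s)) has_real_derivative
           a' * pdX M (a t) (b t) + b' * pdphi M (a t) (b t)) (at t)"
proof -
  have "((\<lambda>s. (a s, b s)) has_derivative (\<lambda>d. (a' * d, b' * d))) (at t)"
    using assms(2,3) unfolding has_field_derivative_def by (rule has_derivative_Pair)
  from diff_chain_at[OF this has_derivative_partials[OF assms(1)]]
  have "((\<lambda>s. M (a s) (b s)) has_derivative
      (\<lambda>d. pdX M (a t) (b t) * (a' * d) + pdphi M (a t) (b t) * (b' * d))) (at t)"
    by (simp add: o_def)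
  then show ?thesis
    unfolding has_field_derivative_def
    by (rule has_derivative_eq_rhs) (simp add: fun_eq_iff algebra_simps)
qed

lemma pdX_has_real_derivative:
  assumes "(\<lambda>z. M (fst z) (snd z)) differentiable (at (x, p))"
  shows "((\<lambda>t. M t p) has_real_derivative pdX M x p) (at x)"
  using has_real_derivative_pd_chain[where a="\<lambda>t. t" and b="\<lambda>_. p", OF _ DERIV_ident DERIV_const]
    assms by simp

lemma pdphi_has_real_derivative:
  assumes "(\<lambda>z. M (fst z) (snd z)) differentiable (at (x, p))"
  shows "((\<lambda>t. M x t) has_real_derivative pdphi M x p) (at p)"
  using has_real_derivative_pd_chain[where a="\<lambda>_. x" and b="\<lambda>t. t", OF _ DERIV_const DERIV_ident]
    assms by simp

lemma mixed_difference_pdphi_pdX: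
  fixes M :: "real \<Rightarrow> real \<Rightarrow> real"
  assumes h: "h > 0"
    and diff: "\<And>s t. s \<in> {x..x+h} \<Longrightarrow> t \<in> {p..p+h} \<Longrightarrow>
      (\<lambda>z. M (fst z) (snd z)) differentiable (at (s, t)) \<and>
      (\<lambda>z. pdX M (fst z) (snd z)) differentiable (at (s, t))"
  obtains s t where "s \<in> {x<..<x+h}" "t \<in> {p<..<p+h}"
    "M (x+h) (p+h) - M (x+h) p - M x (p+h) + M x p = h * h * pdphi (pdX M) s t"
proof -
  have DERIV_in_x: "((\<lambda>s. M s (p+h) - M s p) has_real_derivative pdX M s (p+h) - pdX M s p) (at s)"
    if "x \<le> s" "s \<le> x+h" for s
    using that h diff by (intro derivative_intros pdX_has_real_derivative) auto
  obtain s where s: "s \<in> {x<..<x+h}"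
    and s_eq: "M (x+h) (p+h) - M (x+h) p - (M x (p+h) - M x p) = h * (pdX M s (p+h) - pdX M s p)"
    using MVT2[of x "x+h", OF _ DERIV_in_x] h by auto
  have DERIV_in_phi: "((\<lambda>t. pdX M s t) has_real_derivative pdphi (pdX M) s t) (at t)"
    if "p \<le> t" "t \<le> p+h" for t
    using that s diff by (intro pdphi_has_real_derivative) auto
  obtain t where t: "t \<in> {p<..<p+h}"
    and t_eq: "pdX M s (p+h) - pdX M s p = h * pdphi (pdX M) s t"
    using MVT2[of p "p+h", OF _ DERIV_in_phi] h by auto
  show thesis using that[OF s t] s_eq t_eq by (simp add: algebra_simps)
qed

lemma mixed_difference_pdX_pdphi:
  fixes M :: "real \<Rightarrow> real \<Rightarrow> real"
  assumes h: "h > 0"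
    and diff: "\<And>s t. s \<in> {x..x+h} \<Longrightarrow> t \<in> {p..p+h} \<Longrightarrow>
      (\<lambda>z. M (fst z) (snd z)) differentiable (at (s, t)) \<and>
      (\<lambda>z. pdphi M (fst z) (snd z)) differentiable (at (s, t))"
  obtains s t where "s \<in> {x<..<x+h}" "t \<in> {p<..<p+h}"
    "M (x+h) (p+h) - M (x+h) p - M x (p+h) + M x p = h * h * pdX (pdphi M) s t"
proof -
  have DERIV_in_phi: "((\<lambda>t. M (x+h) t - M x t) has_real_derivative pdphi M (x+h) t - pdphi M x t) (at t)"
    if "p \<le> t" "t \<le> p+h" for t
    using that h diff by (intro derivative_intros pdphi_has_real_derivative) auto
  obtain t where t: "t \<in> {p<..<p+h}"
    and t_eq: "M (x+h) (p+h) - M x (p+h) - (M (x+h) p - M x p) = h * (pdphi M (x+h) t - pdphi M x t)"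
    using MVT2[of p "p+h", OF _ DERIV_in_phi] h by auto
  have DERIV_in_x: "((\<lambda>s. pdphi M s t) has_real_derivative pdX (pdphi M) s t) (at s)"
    if "x \<le> s" "s \<le> x+h" for s
    using that t diff by (intro pdX_has_real_derivative) auto
  obtain s where s: "s \<in> {x<..<x+h}"
    and s_eq: "pdphi M (x+h) t - pdphi M x t = h * pdX (pdphi M) s t"
    using MVT2[of x "x+h", OF _ DERIV_in_x] h by auto
  show thesis using that[OF s t] s_eq t_eq by (simp add: algebra_simps)
qed

lemma pdphi_pdX_eq_pdX_pdphi:
  fixes M :: "real \<Rightarrow> real \<Rightarrow> real"
  assumes U: "open U" "(x, p) \<in> U"
    and "(\<lambda>z. M (fst z) (snd z)) differentiable_on U"
    and "(\<lambda>z. pdX M (fst z) (snd z)) differentiable_on U"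
    and "(\<lambda>z. pdphi M (fst z) (snd z)) differentiable_on U"
    and cont_XP: "isCont (\<lambda>z. pdphi (pdX M) (fst z) (snd z)) (x, p)"
    and cont_PX: "isCont (\<lambda>z. pdX (pdphi M) (fst z) (snd z)) (x, p)"
  shows "pdphi (pdX M) x p = pdX (pdphi M) x p"
proof -
  let ?a = "pdphi (pdX M) x p" and ?b = "pdX (pdphi M) x p"
  have close: "\<bar>?a - ?b\<bar> < 2 * e" if e: "e > 0" for e
  proof -
    obtain r1 where r1: "r1 > 0"
      "\<And>z. dist z (x, p) < r1 \<Longrightarrow> \<bar>pdphi (pdX M) (fst z) (snd z) - ?a\<bar> < e"
      using cont_XP e unfolding continuous_at_eps_delta dist_real_def by force
    obtain r2 where r2: "r2 > 0"
      "\<And>z. dist z (x, p) < r2 \<Longrightarrow> \<bar>pdX (pdphi M) (fst z) (snd z) - ?b\<bar> < e"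
      using cont_PX e unfolding continuous_at_eps_delta dist_real_def by force
    obtain r3 where r3: "r3 > 0" "ball (x, p) r3 \<subseteq> U"
      using U open_contains_ball by blast
    define h where "h = min r1 (min r2 r3) / 3"
    have h: "h > 0" using r1 r2 r3 by (simp add: h_def)
    have near: "dist (s, t) (x, p) < min r1 (min r2 r3)"
      if "s \<in> {x..x+h}" "t \<in> {p..p+h}" for s t
    proof -
      have "dist (s, t) (x, p) \<le> norm (s - x) + norm (t - p)"
        using norm_Pair_le[of "s - x" "t - p"] by (simp add: dist_norm)
      also have "\<dots> \<le> 2 * h" using that by simp
      finally show ?thesis using h unfolding h_def by linarith
    qed
    have "(s, t) \<in> U" if "s \<in> {x..x+h}" "t \<in> {p..p+h}" for s t
      using near[OF that] r3(2) by (auto simp: dist_commute)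
    then have diff: "(\<lambda>z. M (fst z) (snd z)) differentiable (at (s, t)) \<and>
        (\<lambda>z. pdX M (fst z) (snd z)) differentiable (at (s, t)) \<and>
        (\<lambda>z. pdphi M (fst z) (snd z)) differentiable (at (s, t))"
      if "s \<in> {x..x+h}" "t \<in> {p..p+h}" for s t
      using that assms(3-5) differentiable_on_eq_differentiable_at[OF U(1)] by blast
    obtain s1 t1 where st1: "s1 \<in> {x<..<x+h}" "t1 \<in> {p<..<p+h}"
      and eq1: "M (x+h) (p+h) - M (x+h) p - M x (p+h) + M x p = h * h * pdphi (pdX M) s1 t1"
      using mixed_difference_pdphi_pdX[OF h] diff by blast
    obtain s2 t2 where st2: "s2 \<in> {x<..<x+h}" "t2 \<in> {p<..<p+h}"
      and eq2: "M (x+h) (p+h) - M (x+h) p - M x (p+h) + M x p = h * h * pdX (pdphi M) s2 t2"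
      using mixed_difference_pdX_pdphi[OF h] diff by blast
    have "pdphi (pdX M) s1 t1 = pdX (pdphi M) s2 t2"
      using eq1 eq2 h by simp
    moreover have "\<bar>pdphi (pdX M) s1 t1 - ?a\<bar> < e"
      using r1(2)[of "(s1, t1)"] near[of s1 t1] st1 by simp
    moreover have "\<bar>pdX (pdphi M) s2 t2 - ?b\<bar> < e"
      using r2(2)[of "(s2, t2)"] near[of s2 t2] st2 by simp
    ultimately show ?thesis by linarith
  qed
  show ?thesis
    using close[of "\<bar>?a - ?b\<bar> / 2"] by (cases "?a = ?b") auto
qed

section \<open>Smooth functions of one real variable\<close>

(* The finite-order version of smooth1_on: its order is the induction parameter in the
   closure of smooth functions under products and inverses. *)
definition differentiable_upto :: "nat \<Rightarrow> (real \<Rightarrow> real) \<Rightarrow> real set \<Rightarrow> bool" where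
  "differentiable_upto n f S \<longleftrightarrow> (\<forall>k\<le>n. (deriv ^^ k) f differentiable_on S)"

lemma smooth1_on_iff_differentiable_upto: "smooth1_on f S \<longleftrightarrow> (\<forall>n. differentiable_upto n f S)"
  unfolding smooth1_on_def differentiable_upto_def by auto

lemma differentiable_upto_0 [simp]: "differentiable_upto 0 f S \<longleftrightarrow> f differentiable_on S"
  by (simp add: differentiable_upto_def)

lemma differentiable_upto_Suc:
  "differentiable_upto (Suc n) f S \<longleftrightarrow> f differentiable_on S \<and> differentiable_upto n (deriv f) S"
proof -
  have "(\<forall>k\<le>Suc n. P k) \<longleftrightarrow> P 0 \<and> (\<forall>k\<le>n. P (Suc k))" for P
    by (metis Suc_le_mono le0 not0_implies_Suc)
  then show ?thesis
    unfolding differentiable_upto_def by (simp add: funpow_Suc_right del: funpow.simps)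
qed

lemma differentiable_upto_Suc_imp: "differentiable_upto (Suc n) f S \<Longrightarrow> differentiable_upto n f S"
  unfolding differentiable_upto_def by auto

lemma differentiable_on_transform:
  assumes "\<And>x. x \<in> S \<Longrightarrow> f x = g x" "f differentiable_on S"
  shows "g differentiable_on S"
  unfolding differentiable_on_def
proof
  fix x assume x: "x \<in> S"
  then have "f differentiable (at x within S)"
    using assms(2) unfolding differentiable_on_def by blast
  then show "g differentiable (at x within S)"
    by (rule differentiable_transform_within[OF _ zero_less_one x]) (use assms(1) in auto)
qed

lemma deriv_cong_open:
  "open S \<Longrightarrow> (\<And>x. x \<in> S \<Longrightarrow> f x = g x) \<Longrightarrow> x \<in> S \<Longrightarrow> deriv f x = deriv g x"
  by (intro deriv_cong_ev) (auto simp: eventually_nhds)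

lemma higher_deriv_cong_open:
  assumes "open S" "\<And>x. x \<in> S \<Longrightarrow> f x = g x" "x \<in> S"
  shows "(deriv ^^ n) f x = (deriv ^^ n) g x"
  using assms(2,3)
proof (induction n arbitrary: f g x)
  case 0
  then show ?case by simp
next
  case (Suc n)
  have "deriv f y = deriv g y" if "y \<in> S" for y
    using deriv_cong_open[OF assms(1) Suc.prems(1) that] .
  from Suc.IH[OF this Suc.prems(2)] show ?case
    by (simp add: funpow_Suc_right del: funpow.simps)
qed

lemma differentiable_upto_cong:
  assumes "open S" "\<And>x. x \<in> S \<Longrightarrow> f x = g x" "differentiable_upto n f S"
  shows "differentiable_upto n g S"
  unfolding differentiable_upto_def
proof (intro allI impI)
  fix k assume "k \<le> n"
  then have "(deriv ^^ k) f differentiable_on S"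
    using assms(3) unfolding differentiable_upto_def by blast
  then show "(deriv ^^ k) g differentiable_on S"
    by (rule differentiable_on_transform[rotated]) (rule higher_deriv_cong_open[OF assms(1,2)])
qed

lemma differentiable_upto_const: "differentiable_upto n (\<lambda>x. c) S"
  by (induction n arbitrary: c) (simp_all add: differentiable_upto_Suc)

lemma has_real_derivative_deriv_on_open:
  "open S \<Longrightarrow> f differentiable_on S \<Longrightarrow> x \<in> S \<Longrightarrow> (f has_real_derivative deriv f x) (at x)"
  using differentiable_on_eq_differentiable_at DERIV_deriv_iff_real_differentiable by blast

lemma differentiable_upto_add:
  assumes "open S" "differentiable_upto n f S" "differentiable_upto n g S"
  shows "differentiable_upto n (\<lambda>x. f x + g x) S"
  using assms(2,3)
proof (induction n arbitrary: f g)
  case 0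
  then show ?case by simp
next
  case (Suc n)
  then have f: "f differentiable_on S" "differentiable_upto n (deriv f) S"
    and g: "g differentiable_on S" "differentiable_upto n (deriv g) S"
    by (auto simp: differentiable_upto_Suc)
  have "deriv f x + deriv g x = deriv (\<lambda>x. f x + g x) x" if "x \<in> S" for x
    using has_real_derivative_deriv_on_open[OF assms(1) f(1) that]
      has_real_derivative_deriv_on_open[OF assms(1) g(1) that]
    by (intro DERIV_imp_deriv[symmetric] derivative_intros)
  with Suc.IH[OF f(2) g(2)] have "differentiable_upto n (deriv (\<lambda>x. f x + g x)) S"
    by (rule differentiable_upto_cong[OF assms(1), rotated])
  then show ?case using f g by (simp add: differentiable_upto_Suc)
qed

lemma differentiable_upto_mult:
  assumes "open S" "differentiable_upto n f S" "differentiable_upto n g S"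
  shows "differentiable_upto n (\<lambda>x. f x * g x) S"
  using assms(2,3)
proof (induction n arbitrary: f g)
  case 0
  then show ?case by simp
next
  case (Suc n)
  then have f: "f differentiable_on S" "differentiable_upto n (deriv f) S"
    and g: "g differentiable_on S" "differentiable_upto n (deriv g) S"
    by (auto simp: differentiable_upto_Suc)
  have f0: "differentiable_upto n f S" and g0: "differentiable_upto n g S"
    using Suc.prems differentiable_upto_Suc_imp by auto
  have "deriv f x * g x + f x * deriv g x = deriv (\<lambda>x. f x * g x) x" if "x \<in> S" for x
    using has_real_derivative_deriv_on_open[OF assms(1) f(1) that]
      has_real_derivative_deriv_on_open[OF assms(1) g(1) that]
    by (intro DERIV_imp_deriv[symmetric] derivative_eq_intros) auto
  with differentiable_upto_add[OF assms(1) Suc.IH[OF f(2) g0] Suc.IH[OF f0 g(2)]]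
  have "differentiable_upto n (deriv (\<lambda>x. f x * g x)) S"
    by (rule differentiable_upto_cong[OF assms(1), rotated])
  then show ?case using f g by (simp add: differentiable_upto_Suc)
qed

lemma differentiable_upto_inverse:
  assumes "open S" "differentiable_upto n g S" "\<And>x. x \<in> S \<Longrightarrow> g x \<noteq> 0"
  shows "differentiable_upto n (\<lambda>x. inverse (g x)) S"
  using assms(2)
proof (induction n)
  case 0
  then show ?case using assms(3) by simp
next
  case (Suc n)
  then have g: "g differentiable_on S" "differentiable_upto n (deriv g) S"
    by (auto simp: differentiable_upto_Suc)
  have inv_g: "differentiable_upto n (\<lambda>x. inverse (g x)) S"
    using Suc.IH[OF differentiable_upto_Suc_imp[OF Suc.prems]] .
  have "- 1 * (deriv g x * (inverse (g x) * inverse (g x))) = deriv (\<lambda>x. inverse (g x)) x"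
    if "x \<in> S" for x
    using has_real_derivative_deriv_on_open[OF assms(1) g(1) that] assms(3)[OF that]
    by (intro DERIV_imp_deriv[symmetric] derivative_eq_intros) (auto simp: power2_eq_square)
  moreover have "differentiable_upto n (\<lambda>x. - 1 * (deriv g x * (inverse (g x) * inverse (g x)))) S"
    using differentiable_upto_mult[OF assms(1) g(2) differentiable_upto_mult[OF assms(1) inv_g inv_g]]
    by (rule differentiable_upto_mult[OF assms(1) differentiable_upto_const])
  ultimately have "differentiable_upto n (deriv (\<lambda>x. inverse (g x))) S"
    by (rule differentiable_upto_cong[OF assms(1)])
  then show ?case using g assms(3) by (simp add: differentiable_upto_Suc)
qed

lemma smooth1_on_const: "smooth1_on (\<lambda>x. c) S"
  by (simp add: smooth1_on_iff_differentiable_upto differentiable_upto_const)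

lemma smooth1_on_mult:
  "open S \<Longrightarrow> smooth1_on f S \<Longrightarrow> smooth1_on g S \<Longrightarrow> smooth1_on (\<lambda>x. f x * g x) S"
  by (simp add: smooth1_on_iff_differentiable_upto differentiable_upto_mult)

lemma smooth1_on_inverse:
  "open S \<Longrightarrow> smooth1_on g S \<Longrightarrow> (\<And>x. x \<in> S \<Longrightarrow> g x \<noteq> 0) \<Longrightarrow> smooth1_on (\<lambda>x. inverse (g x)) S"
  by (simp add: smooth1_on_iff_differentiable_upto differentiable_upto_inverse)

lemma smooth1_on_imp_differentiable_on: "smooth1_on f S \<Longrightarrow> f differentiable_on S"
  unfolding smooth1_on_def by (metis funpow_0)

lemma smooth1_on_cong:
  assumes "open S" "\<And>x. x \<in> S \<Longrightarrow> f x = g x" "smooth1_on f S"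
  shows "smooth1_on g S"
  using differentiable_upto_cong[of S f g] assms
  unfolding smooth1_on_iff_differentiable_upto by blast

lemma smooth1_on_antiderivative:
  assumes "open S" "smooth1_on h S" "\<And>x. x \<in> S \<Longrightarrow> (F has_real_derivative h x) (at x)"
  shows "smooth1_on F S"
proof -
  have F: "F differentiable_on S"
    using assms(1,3) differentiable_on_eq_differentiable_at real_differentiable_def by blast
  have "differentiable_upto (Suc n) F S" for n
  proof -
    have "h x = deriv F x" if "x \<in> S" for x
      using DERIV_imp_deriv[OF assms(3)[OF that]] by simp
    moreover have "differentiable_upto n h S"
      using assms(2) unfolding smooth1_on_iff_differentiable_upto by blast
    ultimately have "differentiable_upto n (deriv F) S"
      by (rule differentiable_upto_cong[OF assms(1)])
    then show ?thesis using F by (simp add: differentiable_upto_Suc)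
  qed
  then show ?thesis
    unfolding smooth1_on_iff_differentiable_upto using differentiable_upto_Suc_imp by blast
qed

lemma smooth1_on_phi_slice:
  assumes "smooth2_on L U" "open U" "open S" "\<And>p. p \<in> S \<Longrightarrow> (X, p) \<in> U"
  shows "smooth1_on (\<lambda>p. iter_pd ds L X p) S"
proof -
  have diff: "(\<lambda>p. iter_pd ds L X p) differentiable_on S" for ds
    unfolding differentiable_on_eq_differentiable_at[OF assms(3)]
  proof
    fix p assume "p \<in> S"
    then have "(\<lambda>z. iter_pd ds L (fst z) (snd z)) differentiable (at (X, p))"
      using assms(1,2,4) differentiable_on_eq_differentiable_at unfolding smooth2_on_def by blast
    moreover have "(\<lambda>p::real. (X, p)) differentiable (at p)"
      by (intro derivative_intros)
    ultimately show "(\<lambda>p. iter_pd ds L X p) differentiable (at p)"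
      using differentiable_chain_at by (fastforce simp: o_def)
  qed
  have "differentiable_upto n (\<lambda>p. iter_pd ds L X p) S" for n
  proof (induction n arbitrary: ds)
    case 0
    show ?case using diff by simp
  next
    case (Suc n)
    have "deriv (\<lambda>p. iter_pd ds L X p) = (\<lambda>p. iter_pd (False # ds) L X p)"
      by (simp add: pdphi_def)
    then show ?case using diff Suc.IH[of "False # ds"] by (simp add: differentiable_upto_Suc)
  qed
  then show ?thesis by (simp add: smooth1_on_iff_differentiable_upto)
qed

lemma smooth1_on_X_slice:
  assumes "smooth2_on L U" "open U" "open S" "\<And>X. X \<in> S \<Longrightarrow> (X, p) \<in> U"
  shows "smooth1_on (\<lambda>X. iter_pd ds L X p) S"
proof -
  have diff: "(\<lambda>X. iter_pd ds L X p) differentiable_on S" for ds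
    unfolding differentiable_on_eq_differentiable_at[OF assms(3)]
  proof
    fix X assume "X \<in> S"
    then have "(\<lambda>z. iter_pd ds L (fst z) (snd z)) differentiable (at (X, p))"
      using assms(1,2,4) differentiable_on_eq_differentiable_at unfolding smooth2_on_def by blast
    moreover have "(\<lambda>X::real. (X, p)) differentiable (at X)"
      by (intro derivative_intros)
    ultimately show "(\<lambda>X. iter_pd ds L X p) differentiable (at X)"
      using differentiable_chain_at by (fastforce simp: o_def)
  qed
  have "differentiable_upto n (\<lambda>X. iter_pd ds L X p) S" for n
  proof (induction n arbitrary: ds)
    case 0
    show ?case using diff by simp
  next
    case (Suc n)
    have "deriv (\<lambda>X. iter_pd ds L X p) = (\<lambda>X. iter_pd (True # ds) L X p)"
      by (simp add: pdX_def)
    then show ?case using diff Suc.IH[of "True # ds"] by (simp add: differentiable_upto_Suc)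
  qed
  then show ?thesis by (simp add: smooth1_on_iff_differentiable_upto)
qed

lemma exists_antiderivative_on_open_interval:
  fixes h :: "real \<Rightarrow> real"
  assumes I: "open I" "is_interval I" "c \<in> I" and cont: "continuous_on I h"
  obtains F where "\<And>x. x \<in> I \<Longrightarrow> (F has_real_derivative h x) (at x)"
proof -
  define F where "F u = (LBINT y=c..u. h y)" for u
  have "(F has_real_derivative h x) (at x)" if x: "x \<in> I" for x
  proof -
    have "min c x \<in> I" "max c x \<in> I"
      using x I(3) by (simp_all add: min_def max_def)
    then obtain r1 r2 where r: "r1 > 0" "ball (min c x) r1 \<subseteq> I" "r2 > 0" "ball (max c x) r2 \<subseteq> I"
      using I(1) open_contains_ball by meson
    define d e where "d = min c x - r1 / 2" and "e = max c x + r2 / 2"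
    have "d \<in> ball (min c x) r1" "e \<in> ball (max c x) r2"
      using r(1,3) by (simp_all add: d_def e_def dist_real_def)
    then have "d \<in> I" "e \<in> I" using r(2,4) by blast+
    then have de: "{d..e} \<subseteq> I"
      using I(2) unfolding is_interval_1 by (meson atLeastAtMost_iff subsetI)
    have dx: "d < x" and xe: "x < e" and dc: "d \<le> c" and ce: "c \<le> e"
      using r(1,3) min.cobounded1[of c x] min.cobounded2[of c x]
        max.cobounded1[of c x] max.cobounded2[of c x]
      unfolding d_def e_def by linarith+
    have "(F has_vector_derivative h x) (at x within {d..e})"
      unfolding F_def using dx xe
      by (intro interval_integral_FTC2[OF dc ce continuous_on_subset[OF cont de]]) simp_all
    then show ?thesis
      using at_within_Icc_at[OF dx xe]
      by (simp add: has_real_derivative_iff_has_vector_derivative)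
  qed
  then show thesis using that by blast
qed

section \<open>The entropy coefficient\<close>

lemma pdX_rho:
  assumes "(\<lambda>z. L (fst z) (snd z)) differentiable (at (X, ph))"
    and "(\<lambda>z. pdX L (fst z) (snd z)) differentiable (at (X, ph))"
  shows "pdX (rho L) X ph = pdX L X ph + 2 * X * pdX (pdX L) X ph"
proof -
  have "((\<lambda>x. 2 * x * pdX L x ph - L x ph) has_real_derivative
      2 * pdX L X ph + 2 * X * pdX (pdX L) X ph - pdX L X ph) (at X)"
    using pdX_has_real_derivative[OF assms(1)] pdX_has_real_derivative[OF assms(2)]
    by (auto intro!: derivative_eq_intros)
  from DERIV_imp_deriv[OF this] show ?thesis
    unfolding pdX_def[of "rho L"] unfolding rho_def by simp
qed

lemma pdphi_rho:
  assumes "(\<lambda>z. L (fst z) (snd z)) differentiable (at (X, ph))"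
    and "(\<lambda>z. pdX L (fst z) (snd z)) differentiable (at (X, ph))"
  shows "pdphi (rho L) X ph = 2 * X * pdphi (pdX L) X ph - pdphi L X ph"
proof -
  have "((\<lambda>p. 2 * X * pdX L X p - L X p) has_real_derivative
      2 * X * pdphi (pdX L) X ph - pdphi L X ph) (at ph)"
    using pdphi_has_real_derivative[OF assms(1)] pdphi_has_real_derivative[OF assms(2)]
    by (auto intro!: derivative_eq_intros)
  from DERIV_imp_deriv[OF this] show ?thesis
    unfolding pdphi_def[of "rho L"] unfolding rho_def by simp
qed

lemma tau_eq_pdphi_at_constant_rho:
  assumes "(\<lambda>z. L (fst z) (snd z)) differentiable (at (X, ph))"
    and "(\<lambda>z. pdX L (fst z) (snd z)) differentiable (at (X, ph))"
  shows "tau L X ph = pdphi L X ph - pdX L X ph * pdphi (rho L) X ph / pdX (rho L) X ph"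
  unfolding tau_def pdX_rho[OF assms] pdphi_rho[OF assms] by (simp add: right_diff_distrib ac_simps)

definition Lphi_over_XLX :: "(real \<Rightarrow> real \<Rightarrow> real) \<Rightarrow> real \<Rightarrow> real \<Rightarrow> real" where
  "Lphi_over_XLX L = (\<lambda>x p. pdphi L x p / (x * pdX L x p))"

lemma pdX_Lphi_over_XLX:
  assumes "(\<lambda>z. pdX L (fst z) (snd z)) differentiable (at (X, ph))"
    and "(\<lambda>z. pdphi L (fst z) (snd z)) differentiable (at (X, ph))"
    and "X * pdX L X ph \<noteq> 0"
  shows "pdX (Lphi_over_XLX L) X ph =
    (pdX (pdphi L) X ph * (X * pdX L X ph) - pdphi L X ph * (pdX L X ph + X * pdX (pdX L) X ph))
      / (X * pdX L X ph)\<^sup>2"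
proof -
  have "((\<lambda>x. x * pdX L x ph) has_real_derivative pdX L X ph + X * pdX (pdX L) X ph) (at X)"
    using DERIV_mult[OF DERIV_ident pdX_has_real_derivative[OF assms(1)]] by (simp add: mult.commute)
  from DERIV_divide[OF pdX_has_real_derivative[OF assms(2)] this assms(3)]
  show ?thesis
    unfolding pdX_def[of "Lphi_over_XLX L"] unfolding Lphi_over_XLX_def
    by (simp add: DERIV_imp_deriv power2_eq_square)
qed

lemma tau_eq_pdX_Lphi_over_XLX:
  assumes "(\<lambda>z. pdX L (fst z) (snd z)) differentiable (at (X, ph))"
    and "(\<lambda>z. pdphi L (fst z) (snd z)) differentiable (at (X, ph))"
    and sym: "pdphi (pdX L) X ph = pdX (pdphi L) X ph"
    and "X * pdX L X ph \<noteq> 0" and "pdX L X ph + 2 * X * pdX (pdX L) X ph \<noteq> 0"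
  shows "tau L X ph = - 2 * (X * pdX L X ph)\<^sup>2 / (pdX L X ph + 2 * X * pdX (pdX L) X ph)
    * pdX (Lphi_over_XLX L) X ph"
proof -
  define N where "N = pdX (pdphi L) X ph * (X * pdX L X ph)
    - pdphi L X ph * (pdX L X ph + X * pdX (pdX L) X ph)"
  have "tau L X ph = - 2 * N / (pdX L X ph + 2 * X * pdX (pdX L) X ph)"
    unfolding tau_def N_def sym using assms(5) by (simp add: field_simps)
  also have "\<dots> = - 2 * (X * pdX L X ph)\<^sup>2 / (pdX L X ph + 2 * X * pdX (pdX L) X ph)
      * (N / (X * pdX L X ph)\<^sup>2)"
    using assms(4) by simp
  finally show ?thesis
    unfolding pdX_Lphi_over_XLX[OF assms(1,2,4)] N_def .
qed

lemma Lphi_over_XLX_kinetic_form: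
  assumes I: "open I" "ph \<in> I" and X: "X > 0"
    and L_eq: "\<And>X ph. X > 0 \<Longrightarrow> ph \<in> I \<Longrightarrow> L X ph = G (exp (- 2 * f ph) * X)"
    and f: "(f has_real_derivative f') (at ph)"
    and G: "(G has_real_derivative G') (at (exp (- 2 * f ph) * X))"
    and "pdX L X ph \<noteq> 0"
  shows "Lphi_over_XLX L X ph = - 2 * f'"
proof -
  let ?c = "exp (- 2 * f ph)"
  have "((\<lambda>x. G (?c * x)) has_real_derivative G' * ?c) (at X)"
    using DERIV_chain2[OF G DERIV_cmult[OF DERIV_ident, of ?c]] by (simp add: mult.commute)
  then have "((\<lambda>x. L x ph) has_real_derivative G' * ?c) (at X)"
    by (rule has_field_derivative_transform_within_open[OF _ open_greaterThan])
      (use X I(2) L_eq in auto)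
  then have LX: "pdX L X ph = G' * ?c"
    unfolding pdX_def by (rule DERIV_imp_deriv)
  have "((\<lambda>p. exp (- 2 * f p) * X) has_real_derivative ?c * (- 2 * f') * X) (at ph)"
    by (intro DERIV_cmult_right DERIV_fun_exp DERIV_cmult f)
  from DERIV_chain2[OF G this]
  have "((\<lambda>p. L X p) has_real_derivative G' * (?c * (- 2 * f') * X)) (at ph)"
    by (rule has_field_derivative_transform_within_open[OF _ I]) (use X L_eq in auto)
  then have Lphi: "pdphi L X ph = G' * (?c * (- 2 * f') * X)"
    unfolding pdphi_def by (rule DERIV_imp_deriv)
  show ?thesis
    using X assms(7) unfolding Lphi_over_XLX_def LX Lphi by (simp add: field_simps)
qed

locale scalar_lagrangian =
  fixes L :: "real \<Rightarrow> real \<Rightarrow> real" and I :: "real set"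
  assumes open_I: "open I" and interval_I: "is_interval I"
    and smooth: "smooth2_on L ({0<..} \<times> I)"
    and pdX_nonzero: "\<And>X ph. X > 0 \<Longrightarrow> ph \<in> I \<Longrightarrow> pdX L X ph \<noteq> 0"
begin

lemma open_domain: "open ({0::real<..} \<times> I)"
  by (simp add: open_Times open_I)

lemma iter_pd_differentiable_at:
  assumes "X > 0" "ph \<in> I"
  shows "(\<lambda>z. iter_pd ds L (fst z) (snd z)) differentiable (at (X, ph))"
  using smooth assms differentiable_on_eq_differentiable_at[OF open_domain]
  unfolding smooth2_on_def by auto

lemma L_differentiable_at:
  "X > 0 \<Longrightarrow> ph \<in> I \<Longrightarrow> (\<lambda>z. L (fst z) (snd z)) differentiable (at (X, ph))"
  using iter_pd_differentiable_at[of X ph "[]"] by simp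

lemma pdX_L_differentiable_at:
  "X > 0 \<Longrightarrow> ph \<in> I \<Longrightarrow> (\<lambda>z. pdX L (fst z) (snd z)) differentiable (at (X, ph))"
  using iter_pd_differentiable_at[of X ph "[True]"] by simp

lemma pdphi_L_differentiable_at:
  "X > 0 \<Longrightarrow> ph \<in> I \<Longrightarrow> (\<lambda>z. pdphi L (fst z) (snd z)) differentiable (at (X, ph))"
  using iter_pd_differentiable_at[of X ph "[False]"] by simp

lemma mixed_partials_commute:
  assumes "X > 0" "ph \<in> I"
  shows "pdphi (pdX L) X ph = pdX (pdphi L) X ph"
proof (rule pdphi_pdX_eq_pdX_pdphi[OF open_domain])
  have "(\<lambda>z. iter_pd ds L (fst z) (snd z)) differentiable_on {0<..} \<times> I" for ds
    using smooth unfolding smooth2_on_def by blast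
  from this[of "[]"] this[of "[True]"] this[of "[False]"]
  show "(\<lambda>z. L (fst z) (snd z)) differentiable_on {0<..} \<times> I"
    "(\<lambda>z. pdX L (fst z) (snd z)) differentiable_on {0<..} \<times> I"
    "(\<lambda>z. pdphi L (fst z) (snd z)) differentiable_on {0<..} \<times> I"
    by simp_all
  show "isCont (\<lambda>z. pdphi (pdX L) (fst z) (snd z)) (X, ph)"
    using differentiable_imp_continuous_within[OF iter_pd_differentiable_at[OF assms, of "[False, True]"]]
    by simp
  show "isCont (\<lambda>z. pdX (pdphi L) (fst z) (snd z)) (X, ph)"
    using differentiable_imp_continuous_within[OF iter_pd_differentiable_at[OF assms, of "[True, False]"]]
    by simp
qed (use assms in simp)

lemma Lphi_over_XLX_differentiable_at:
  assumes "X > 0" "ph \<in> I"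
  shows "(\<lambda>z. Lphi_over_XLX L (fst z) (snd z)) differentiable (at (X, ph))"
proof -
  have "fst differentiable (at (X, ph))"
    by (simp add: bounded_linear_imp_differentiable bounded_linear_fst)
  then show ?thesis
    unfolding Lphi_over_XLX_def
    using pdX_L_differentiable_at[OF assms] pdphi_L_differentiable_at[OF assms]
      pdX_nonzero[OF assms] assms
    by (auto intro!: derivative_intros)
qed

lemma Lphi_over_XLX_eq_at_1:
  assumes ratio_indep: "\<And>X ph. X > 0 \<Longrightarrow> ph \<in> I \<Longrightarrow> pdX (Lphi_over_XLX L) X ph = 0"
    and "X > 0" "ph \<in> I"
  shows "Lphi_over_XLX L X ph = Lphi_over_XLX L 1 ph"
proof -
  have "(\<lambda>x. Lphi_over_XLX L x ph) constant_on {0<..}"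
  proof (rule has_field_derivative_0_imp_constant_on)
    show "((\<lambda>x. Lphi_over_XLX L x ph) has_real_derivative 0) (at x)" if "x \<in> {0<..}" for x
      using pdX_has_real_derivative[OF Lphi_over_XLX_differentiable_at] ratio_indep that assms(3)
      by fastforce
  qed (simp_all add: convex_connected)
  then show ?thesis
    using assms(2) unfolding constant_on_def by force
qed

lemma L_constant_along_characteristics:
  assumes ratio_indep: "\<And>X ph. X > 0 \<Longrightarrow> ph \<in> I \<Longrightarrow> pdX (Lphi_over_XLX L) X ph = 0"
    and f: "\<And>p. p \<in> I \<Longrightarrow> (f has_real_derivative - 1 / 2 * Lphi_over_XLX L 1 p) (at p)"
    and "Y > 0" "t \<in> I" "s \<in> I"
  shows "L (exp (2 * f t) * Y) t = L (exp (2 * f s) * Y) s"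
proof -
  define a where "a p = exp (2 * f p) * Y" for p
  have a_pos: "a p > 0" for p
    using \<open>Y > 0\<close> by (simp add: a_def)
  have "(\<lambda>p. L (a p) p) constant_on I"
  proof (rule has_field_derivative_0_imp_constant_on)
    fix p assume p: "p \<in> I"
    let ?q = "Lphi_over_XLX L 1 p"
    have "(a has_real_derivative a p * - ?q) (at p)"
      unfolding a_def by (auto intro!: derivative_eq_intros f p)
    from has_real_derivative_pd_chain[OF L_differentiable_at[OF a_pos p] this DERIV_ident]
    have "((\<lambda>p. L (a p) p) has_real_derivative
        a p * - ?q * pdX L (a p) p + 1 * pdphi L (a p) p) (at p)" .
    moreover have "pdphi L (a p) p = ?q * (a p * pdX L (a p) p)"
    proof -
      have "pdphi L (a p) p = Lphi_over_XLX L (a p) p * (a p * pdX L (a p) p)"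
        using a_pos[of p] pdX_nonzero[OF a_pos p] unfolding Lphi_over_XLX_def by simp
      then show ?thesis
        using Lphi_over_XLX_eq_at_1[OF ratio_indep a_pos[of p] p] by simp
    qed
    ultimately show "((\<lambda>p. L (a p) p) has_real_derivative 0) (at p)"
      by (simp add: algebra_simps)
  qed (simp_all add: open_I is_interval_connected[OF interval_I])
  then show ?thesis
    using assms(4,5) unfolding constant_on_def a_def by force
qed

lemma smooth1_on_Lphi_over_XLX_at_1: "smooth1_on (\<lambda>p. Lphi_over_XLX L 1 p) I"
proof -
  have slice: "smooth1_on (\<lambda>p. iter_pd ds L 1 p) I" for ds
    by (rule smooth1_on_phi_slice[OF smooth open_domain open_I]) simp
  have "smooth1_on (\<lambda>p. iter_pd [False] L 1 p * inverse (iter_pd [True] L 1 p)) I"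
    by (rule smooth1_on_mult[OF open_I slice smooth1_on_inverse[OF open_I slice]])
      (simp add: pdX_nonzero)
  then show ?thesis
    by (rule smooth1_on_cong[OF open_I, rotated]) (simp add: Lphi_over_XLX_def divide_inverse)
qed

lemma kinetic_form_if_pdX_Lphi_over_XLX_eq_0:
  assumes ratio_indep: "\<And>X ph. X > 0 \<Longrightarrow> ph \<in> I \<Longrightarrow> pdX (Lphi_over_XLX L) X ph = 0"
  obtains f G where "smooth1_on f I" "smooth1_on G {0<..}"
    "\<And>X ph. X > 0 \<Longrightarrow> ph \<in> I \<Longrightarrow> L X ph = G (exp (- 2 * f ph) * X)"
proof (cases "I = {}")
  case True
  show thesis
    by (rule that[OF smooth1_on_const smooth1_on_const]) (use True in simp)
next
  case False
  then obtain p0 where p0: "p0 \<in> I" by blast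
  define q where "q p = - 1 / 2 * Lphi_over_XLX L 1 p" for p
  have q_smooth: "smooth1_on q I"
    unfolding q_def by (rule smooth1_on_mult[OF open_I smooth1_on_const smooth1_on_Lphi_over_XLX_at_1])
  then have "continuous_on I q"
    by (intro differentiable_imp_continuous_on smooth1_on_imp_differentiable_on)
  then obtain F where F: "\<And>p. p \<in> I \<Longrightarrow> (F has_real_derivative q p) (at p)"
    using exists_antiderivative_on_open_interval[OF open_I interval_I p0] by blast
  define f where "f p = F p - F p0" for p
  have f_deriv: "(f has_real_derivative q p) (at p)" if "p \<in> I" for p
    unfolding f_def using DERIV_diff[OF F[OF that] DERIV_const] by simp
  have "smooth1_on f I"
    by (rule smooth1_on_antiderivative[OF open_I q_smooth f_deriv])
  moreover have "smooth1_on (\<lambda>Y. L Y p0) {0<..}"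
    using smooth1_on_X_slice[OF smooth open_domain open_greaterThan, where p=p0 and ds="[]"] p0 by simp
  moreover have "L X ph = L (exp (- 2 * f ph) * X) p0" if "X > 0" "ph \<in> I" for X ph
  proof -
    have along: "L (exp (2 * f ph) * (exp (- 2 * f ph) * X)) ph
        = L (exp (2 * f p0) * (exp (- 2 * f ph) * X)) p0"
      using f_deriv that p0 unfolding q_def
      by (intro L_constant_along_characteristics[OF ratio_indep]) auto
    have cancel: "exp (2 * f ph) * (exp (- 2 * f ph) * X) = X"
      by (simp add: mult.assoc[symmetric] exp_add[symmetric])
    have "f p0 = 0" by (simp add: f_def)
    then show ?thesis using along unfolding cancel by simp
  qed
  ultimately show thesis using that by blast
qed

lemma pdX_Lphi_over_XLX_eq_0_if_kinetic_form:
  assumes f: "smooth1_on f I" and G: "smooth1_on G {0<..}"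
    and L_eq: "\<And>X ph. X > 0 \<Longrightarrow> ph \<in> I \<Longrightarrow> L X ph = G (exp (- 2 * f ph) * X)"
    and "X > 0" "ph \<in> I"
  shows "pdX (Lphi_over_XLX L) X ph = 0"
proof -
  have f': "(f has_real_derivative deriv f ph) (at ph)"
    using has_real_derivative_deriv_on_open[OF open_I smooth1_on_imp_differentiable_on[OF f]]
      \<open>ph \<in> I\<close> .
  have G': "(G has_real_derivative deriv G Y) (at Y)" if "Y > 0" for Y
    using has_real_derivative_deriv_on_open[OF open_greaterThan smooth1_on_imp_differentiable_on[OF G]]
      that by simp
  have "Lphi_over_XLX L x ph = - 2 * deriv f ph" if "x \<in> {0<..}" for x
    using that \<open>ph \<in> I\<close>
    by (intro Lphi_over_XLX_kinetic_form[OF open_I _ _ L_eq f' G' pdX_nonzero]) auto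
  then have "pdX (Lphi_over_XLX L) X ph = deriv (\<lambda>x. - 2 * deriv f ph) X"
    unfolding pdX_def using \<open>X > 0\<close> by (intro deriv_cong_open[OF open_greaterThan]) auto
  then show ?thesis by simp
qed

end

theorem mainTheorem2:
  fixes L :: "real \<Rightarrow> real \<Rightarrow> real" and I :: "real set"
  assumes I_open: "open I" and I_interval: "is_interval I"
    and smooth: "smooth2_on L ({0<..} \<times> I)"
    and LX_nz: "\<And>X ph. X > 0 \<Longrightarrow> ph \<in> I \<Longrightarrow> pdX L X ph \<noteq> 0"
    and den_nz: "\<And>X ph. X > 0 \<Longrightarrow> ph \<in> I \<Longrightarrow> pdX L X ph + 2 * X * pdX (pdX L) X ph \<noteq> 0"
  shows "(\<forall>X ph. X > 0 \<longrightarrow> ph \<in> I \<longrightarrow>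
            tau L X ph = pdphi L X ph - pdX L X ph * pdphi (rho L) X ph / pdX (rho L) X ph)
       \<and> ((\<forall>X ph. X > 0 \<longrightarrow> ph \<in> I \<longrightarrow> tau L X ph = 0) \<longleftrightarrow>
          (\<forall>X ph. X > 0 \<longrightarrow> ph \<in> I \<longrightarrow>
             pdX (\<lambda>x p. pdphi L x p / (x * pdX L x p)) X ph = 0))
       \<and> ((\<forall>X ph. X > 0 \<longrightarrow> ph \<in> I \<longrightarrow> tau L X ph = 0) \<longleftrightarrow>
          (\<exists>f G. smooth1_on f I \<and> smooth1_on G {0<..} \<and>
             (\<forall>X ph. X > 0 \<longrightarrow> ph \<in> I \<longrightarrow> L X ph = G (exp (- 2 * f ph) * X))))"
proof -
  interpret scalar_lagrangian L I
    using I_open I_interval smooth LX_nz by unfold_locales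
  have rho_form: "tau L X ph = pdphi L X ph - pdX L X ph * pdphi (rho L) X ph / pdX (rho L) X ph"
    if "X > 0" "ph \<in> I" for X ph
    using tau_eq_pdphi_at_constant_rho[OF L_differentiable_at[OF that] pdX_L_differentiable_at[OF that]] .
  have tau_iff: "tau L X ph = 0 \<longleftrightarrow> pdX (Lphi_over_XLX L) X ph = 0"
    if "X > 0" "ph \<in> I" for X ph
    using tau_eq_pdX_Lphi_over_XLX[OF pdX_L_differentiable_at[OF that]
        pdphi_L_differentiable_at[OF that] mixed_partials_commute[OF that] _ den_nz[OF that]]
      LX_nz[OF that] den_nz[OF that] that
    by simp
  have kinetic_iff: "(\<exists>f G. smooth1_on f I \<and> smooth1_on G {0<..} \<and>
        (\<forall>X ph. X > 0 \<longrightarrow> ph \<in> I \<longrightarrow> L X ph = G (exp (- 2 * f ph) * X)))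
      \<longleftrightarrow> (\<forall>X ph. X > 0 \<longrightarrow> ph \<in> I \<longrightarrow> pdX (Lphi_over_XLX L) X ph = 0)"
    using kinetic_form_if_pdX_Lphi_over_XLX_eq_0 pdX_Lphi_over_XLX_eq_0_if_kinetic_form
    by (metis (no_types, lifting))
  show ?thesis
    using rho_form tau_iff kinetic_iff unfolding Lphi_over_XLX_def by blast
qed

end
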